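(* Let $G$ be a finite perfect graph. Then $G$ is symmetric with respect to graph entropy (i.e., the uniform distribution on $V(G)$ maximizes $H(G,P)$ over all probability distributions $P$ on $V(G)$) if and only if $V(G)$ can be partitioned into vertex sets of pairwise disjoint cliques of $G$, each of size $\omega(G)$ (the maximum clique size of $G$).
   Context: For a finite graph $G$ with $V(G)=\{1,\dots,n\}$, the vertex packing polytope $VP(G)\subseteq\mathbb{R}^n$ is the convex hull of the characteristic vectors of the independent sets of $G$. For a probability distribution $P=(p_1,\dots,p_n)$ on $V(G)$, the graph entropy is $H(G,P)=\min_{\mathbf a\in VP(G)}\sum_{i=1}^n p_i\log(1/a_i)$. A graph is called symmetric with respect to graph entropy if the uniform distribution on its vertex set attains $\max_P H(G,P)$. *)

theory Defs
  imports "HOL-Analysis.Analysis"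
begin

text \<open>A finite simple graph: vertex set = the finite type 'a, edges given by a
symmetric irreflexive relation E.\<close>

definition simple_graph :: "('a \<Rightarrow> 'a \<Rightarrow> bool) \<Rightarrow> bool" where
  "simple_graph E \<longleftrightarrow> (\<forall>x y. E x y \<longrightarrow> E y x) \<and> (\<forall>x. \<not> E x x)"

definition independent :: "('a \<Rightarrow> 'a \<Rightarrow> bool) \<Rightarrow> 'a set \<Rightarrow> bool" where
  "independent E S \<longleftrightarrow> (\<forall>x\<in>S. \<forall>y\<in>S. \<not> E x y)"

definition clique :: "('a \<Rightarrow> 'a \<Rightarrow> bool) \<Rightarrow> 'a set \<Rightarrow> bool" where
  "clique E S \<longleftrightarrow> (\<forall>x\<in>S. \<forall>y\<in>S. x \<noteq> y \<longrightarrow> E x y)"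

definition clique_number :: "('a \<Rightarrow> 'a \<Rightarrow> bool) \<Rightarrow> 'a set \<Rightarrow> nat" where
  "clique_number E S = Max {card C | C. C \<subseteq> S \<and> clique E C}"

definition chromatic_number :: "('a \<Rightarrow> 'a \<Rightarrow> bool) \<Rightarrow> 'a set \<Rightarrow> nat" where
  "chromatic_number E S = (LEAST k. \<exists>c :: 'a \<Rightarrow> nat.
      (\<forall>x\<in>S. c x < k) \<and> (\<forall>x\<in>S. \<forall>y\<in>S. E x y \<longrightarrow> c x \<noteq> c y))"

definition perfect :: "('a \<Rightarrow> 'a \<Rightarrow> bool) \<Rightarrow> bool" where
  "perfect E \<longleftrightarrow> (\<forall>S. chromatic_number E S = clique_number E S)"

definition VP :: "('a::finite \<Rightarrow> 'a \<Rightarrow> bool) \<Rightarrow> (real ^ 'a) set" where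
  "VP E = convex hull {(\<chi> i. if i \<in> S then 1 else 0) | S. independent E S}"

definition prob_dist :: "real ^ ('a::finite) \<Rightarrow> bool" where
  "prob_dist P \<longleftrightarrow> (\<forall>i. P $ i \<ge> 0) \<and> (\<Sum>i\<in>UNIV. P $ i) = 1"

text \<open>Points a with a_i = 0 for some p_i > 0 give value +infinity and are excluded;
terms with p_i = 0 contribute 0. The minimum is attained, so Inf = min.\<close>
definition graph_entropy :: "('a::finite \<Rightarrow> 'a \<Rightarrow> bool) \<Rightarrow> real ^ 'a \<Rightarrow> real" where
  "graph_entropy E P = Inf ((\<lambda>a. \<Sum>i\<in>UNIV. P $ i * log 2 (1 / a $ i)) `
      {a \<in> VP E. \<forall>i. P $ i > 0 \<longrightarrow> a $ i > 0})"

definition uniform_dist :: "real ^ ('a::finite)" where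
  "uniform_dist = (\<chi> i. 1 / real CARD('a))"

definition entropy_symmetric :: "('a::finite \<Rightarrow> 'a \<Rightarrow> bool) \<Rightarrow> bool" where
  "entropy_symmetric E \<longleftrightarrow>
     (\<forall>P. prob_dist P \<longrightarrow> graph_entropy E P \<le> graph_entropy E uniform_dist)"

end

theory Submission
  imports Defs
begin

text \<open>If \<open>\<chi>(G) = \<omega>(G) = \<omega>\<close>, averaging the colour classes of an \<open>\<omega>\<close>-colouring puts
  \<open>(1/\<omega>, \<dots>, 1/\<omega>)\<close> into the vertex packing polytope, so \<open>H(G,P) \<le> log \<omega>\<close> for every \<open>P\<close>; the
  uniform distribution on a maximum clique attains \<open>log \<omega>\<close>. Hence \<open>G\<close> is symmetric iff
  \<open>H(G,U) \<ge> log \<omega>\<close>, which holds iff \<open>\<alpha>(G) \<omega> \<le> n\<close>: then \<open>\<Sum>a\<^sub>i \<le> n/\<omega>\<close> on the polytope and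
  \<open>ln x \<le> x - 1\<close> gives the bound, while otherwise moving from \<open>(1/\<omega>, \<dots>, 1/\<omega>)\<close> slightly towards
  the indicator of a maximum independent set lowers the uniform objective.

  For perfect \<open>G\<close>, \<open>\<alpha> \<omega> \<le> n\<close> is equivalent to a partition into \<open>\<omega>\<close>-cliques. A partition
  bounds \<open>\<alpha>\<close> by the number of cliques. Conversely \<open>n \<le> \<chi> \<alpha> = \<omega> \<alpha>\<close> forces \<open>n = \<alpha> \<omega>\<close>, and by
  Lov\'asz's lemma some clique \<open>K\<close> meets every maximum independent set; counting shows that
  \<open>|K| = \<omega>\<close> and that \<open>G - K\<close> again satisfies \<open>n = \<alpha> \<omega>\<close> with the same \<open>\<omega>\<close>, so induction applies.\<close>

section \<open>Colourings, cliques and independent sets\<close>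

definition proper_coloring :: "('b \<Rightarrow> 'b \<Rightarrow> bool) \<Rightarrow> 'b set \<Rightarrow> nat \<Rightarrow> ('b \<Rightarrow> nat) \<Rightarrow> bool" where
  "proper_coloring E T k c \<longleftrightarrow> (\<forall>x\<in>T. c x < k) \<and> (\<forall>x\<in>T. \<forall>y\<in>T. E x y \<longrightarrow> c x \<noteq> c y)"

definition colorable :: "('b \<Rightarrow> 'b \<Rightarrow> bool) \<Rightarrow> 'b set \<Rightarrow> nat \<Rightarrow> bool" where
  "colorable E T k \<longleftrightarrow> (\<exists>c. proper_coloring E T k c)"

definition independence_number :: "('b \<Rightarrow> 'b \<Rightarrow> bool) \<Rightarrow> 'b set \<Rightarrow> nat" where
  "independence_number E T = Max {card A | A. A \<subseteq> T \<and> independent E A}"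

definition perfect_on :: "('b \<Rightarrow> 'b \<Rightarrow> bool) \<Rightarrow> 'b set \<Rightarrow> bool" where
  "perfect_on E S \<longleftrightarrow> (\<forall>T\<subseteq>S. chromatic_number E T = clique_number E T)"

lemma simple_graph_sym: "simple_graph E \<Longrightarrow> E x y \<Longrightarrow> E y x"
  and simple_graph_irrefl: "simple_graph E \<Longrightarrow> \<not> E x x"
  unfolding simple_graph_def by blast+

lemma perfect_iff_perfect_on_UNIV: "perfect E \<longleftrightarrow> perfect_on E UNIV"
  unfolding perfect_def perfect_on_def by simp

lemma perfect_on_subset: "perfect_on E S \<Longrightarrow> T \<subseteq> S \<Longrightarrow> perfect_on E T"
  unfolding perfect_on_def by auto

lemma chromatic_number_eq_Least: "chromatic_number E T = (LEAST k. colorable E T k)"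
  unfolding chromatic_number_def colorable_def proper_coloring_def by simp

lemma colorable_mono: "colorable E T k \<Longrightarrow> k \<le> l \<Longrightarrow> colorable E T l"
  unfolding colorable_def proper_coloring_def by (blast intro: order_less_le_trans)

lemma colorable_card:
  assumes "finite T" "\<And>x. \<not> E x x"
  shows "colorable E T (card T)"
proof -
  obtain h where h: "bij_betw h T {0..<card T}"
    using ex_bij_betw_finite_nat[OF assms(1)] by blast
  have "proper_coloring E T (card T) h"
    using h assms(2) unfolding proper_coloring_def bij_betw_def inj_on_def by auto
  then show ?thesis unfolding colorable_def by blast
qed

lemma colorable_chromatic_number:
  assumes "finite T" "\<And>x. \<not> E x x"
  shows "colorable E T (chromatic_number E T)"
  unfolding chromatic_number_eq_Least using colorable_card[where E=E, OF assms] by (rule LeastI)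

lemma chromatic_number_le: "colorable E T k \<Longrightarrow> chromatic_number E T \<le> k"
  unfolding chromatic_number_eq_Least by (rule Least_le)

lemma colorable_Un_independent:
  assumes "colorable E A k" "independent E B"
  shows "colorable E (A \<union> B) (Suc k)"
proof -
  obtain c where c: "proper_coloring E A k c" using assms(1) unfolding colorable_def by blast
  have "proper_coloring E (A \<union> B) (Suc k) (\<lambda>x. if x \<in> A then c x else k)"
    unfolding proper_coloring_def
  proof (intro conjI ballI impI)
    fix x y assume "x \<in> A \<union> B" "y \<in> A \<union> B" "E x y"
    then show "(if x \<in> A then c x else k) \<noteq> (if y \<in> A then c y else k)"
      using c assms(2) unfolding proper_coloring_def independent_def
      by (cases "x \<in> A"; cases "y \<in> A") auto
  qed (use c in \<open>auto simp: proper_coloring_def\<close>)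
  then show ?thesis unfolding colorable_def by blast
qed

lemma card_independent_Int_clique_le_1:
  assumes "independent E A" "clique E C"
  shows "card (A \<inter> C) \<le> 1"
proof (cases "finite (A \<inter> C)")
  case True
  have "\<forall>x\<in>A \<inter> C. \<forall>y\<in>A \<inter> C. x = y"
    using assms unfolding independent_def clique_def by blast
  then have "card (A \<inter> C) \<le> Suc 0" using card_le_Suc0_iff_eq[OF True] by blast
  then show ?thesis by simp
qed simp

lemma
  assumes "finite T"
  shows finite_clique_cards: "finite {card C | C. C \<subseteq> T \<and> clique E C}"
    and clique_cards_nonempty: "{card C | C. C \<subseteq> T \<and> clique E C} \<noteq> {}"
    and finite_independent_cards: "finite {card A | A. A \<subseteq> T \<and> independent E A}"
    and independent_cards_nonempty: "{card A | A. A \<subseteq> T \<and> independent E A} \<noteq> {}"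
proof -
  have fin: "finite (card ` Pow T)" using assms by simp
  show "finite {card C | C. C \<subseteq> T \<and> clique E C}" by (rule finite_subset[OF _ fin]) auto
  show "finite {card A | A. A \<subseteq> T \<and> independent E A}" by (rule finite_subset[OF _ fin]) auto
  have "clique E {}" "independent E {}" unfolding clique_def independent_def by simp_all
  then show "{card C | C. C \<subseteq> T \<and> clique E C} \<noteq> {}"
    and "{card A | A. A \<subseteq> T \<and> independent E A} \<noteq> {}" by auto
qed

lemma obtain_max_clique:
  assumes "finite T"
  obtains C where "C \<subseteq> T" "clique E C" "card C = clique_number E T"
proof -
  have "clique_number E T \<in> {card C | C. C \<subseteq> T \<and> clique E C}"
    unfolding clique_number_def
    using finite_clique_cards[OF assms] clique_cards_nonempty[OF assms] by (rule Max_in)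
  then show ?thesis using that by auto
qed

lemma card_le_clique_number:
  assumes "finite T" "C \<subseteq> T" "clique E C"
  shows "card C \<le> clique_number E T"
  unfolding clique_number_def
  by (rule Max_ge[OF finite_clique_cards[OF assms(1)]]) (use assms(2,3) in blast)

lemma obtain_max_independent:
  assumes "finite T"
  obtains A where "A \<subseteq> T" "independent E A" "card A = independence_number E T"
proof -
  have "independence_number E T \<in> {card A | A. A \<subseteq> T \<and> independent E A}"
    unfolding independence_number_def
    using finite_independent_cards[OF assms] independent_cards_nonempty[OF assms] by (rule Max_in)
  then show ?thesis using that by auto
qed

lemma card_le_independence_number:
  assumes "finite T" "A \<subseteq> T" "independent E A"
  shows "card A \<le> independence_number E T"
  unfolding independence_number_def
  by (rule Max_ge[OF finite_independent_cards[OF assms(1)]]) (use assms(2,3) in blast)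

lemma clique_number_mono:
  assumes "finite T" "U \<subseteq> T"
  shows "clique_number E U \<le> clique_number E T"
proof -
  obtain C where "C \<subseteq> U" "clique E C" "card C = clique_number E U"
    using obtain_max_clique[OF finite_subset[OF assms(2,1)]] .
  then show ?thesis using card_le_clique_number[OF assms(1), of C E] assms(2) by simp
qed

lemma clique_number_pos:
  assumes "finite T" "x \<in> T"
  shows "clique_number E T \<ge> 1"
  using card_le_clique_number[OF assms(1), of "{x}" E] assms(2) by (simp add: clique_def)

lemma independence_number_pos:
  assumes "finite T" "x \<in> T" "\<not> E x x"
  shows "independence_number E T \<ge> 1"
  using card_le_independence_number[OF assms(1), of "{x}" E] assms(2,3)
  by (simp add: independent_def)

lemma proper_coloring_inj_on_clique:
  assumes "proper_coloring E T k c" "C \<subseteq> T" "clique E C"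
  shows "inj_on c C"
  using assms unfolding proper_coloring_def clique_def inj_on_def by blast

lemma card_clique_le_colorable:
  assumes "colorable E T k" "C \<subseteq> T" "clique E C"
  shows "card C \<le> k"
proof -
  obtain c where c: "proper_coloring E T k c" using assms(1) unfolding colorable_def by blast
  have "card C = card (c ` C)"
    using proper_coloring_inj_on_clique[OF c assms(2,3)] by (simp add: card_image)
  also have "\<dots> \<le> card {..<k}"
    using c assms(2) unfolding proper_coloring_def by (intro card_mono) auto
  finally show ?thesis by simp
qed

lemma proper_coloring_image_max_clique:
  assumes "proper_coloring E T k c" "C \<subseteq> T" "clique E C" "card C = k"
  shows "c ` C = {..<k}"
proof (rule card_subset_eq)
  show "c ` C \<subseteq> {..<k}" using assms(1,2) unfolding proper_coloring_def by auto
  show "card (c ` C) = card {..<k}"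
    using proper_coloring_inj_on_clique[OF assms(1-3)] assms(4) by (simp add: card_image)
qed simp

lemma clique_number_le_chromatic_number:
  assumes "finite T" "\<And>x. \<not> E x x"
  shows "clique_number E T \<le> chromatic_number E T"
proof -
  obtain C where "C \<subseteq> T" "clique E C" "card C = clique_number E T"
    using obtain_max_clique[OF assms(1)] .
  then show ?thesis
    using card_clique_le_colorable[OF colorable_chromatic_number[where E=E, OF assms]] by metis
qed

lemma independent_color_class:
  "proper_coloring E T k c \<Longrightarrow> independent E {x\<in>T. c x = j}"
  unfolding proper_coloring_def independent_def by (simp (no_asm_simp)) metis

lemma card_le_colorable_mult_independence_number:
  assumes "finite T" "colorable E T k"
  shows "card T \<le> k * independence_number E T"
proof -
  obtain c where c: "proper_coloring E T k c" using assms(2) unfolding colorable_def by blast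
  have T: "T = (\<Union>j<k. {x\<in>T. c x = j})" using c unfolding proper_coloring_def by auto
  have "card T \<le> (\<Sum>j<k. card {x\<in>T. c x = j})"
    by (subst T) (rule card_UN_le, simp)
  also have "\<dots> \<le> (\<Sum>j<k. independence_number E T)"
  proof (rule sum_mono)
    fix j
    have "independent E {x\<in>T. c x = j}" using c by (rule independent_color_class)
    then show "card {x\<in>T. c x = j} \<le> independence_number E T"
      using assms(1) by (intro card_le_independence_number) auto
  qed
  finally show ?thesis by simp
qed

lemma perfect_on_colorable:
  assumes "perfect_on E S" "T \<subseteq> S" "finite T" "\<And>x. \<not> E x x"
  shows "colorable E T (clique_number E T)"
  using assms colorable_chromatic_number[where E=E, OF assms(3,4)] unfolding perfect_on_def by simp

lemma perfect_onI:
  assumes "finite S" "\<And>x. \<not> E x x" "\<And>T. T \<subseteq> S \<Longrightarrow> colorable E T (clique_number E T)"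
  shows "perfect_on E S"
  unfolding perfect_on_def
proof (intro allI impI)
  fix T assume T: "T \<subseteq> S"
  then have "finite T" using assms(1) by (rule finite_subset)
  then have "clique_number E T \<le> chromatic_number E T"
    by (rule clique_number_le_chromatic_number) (rule assms(2))
  then show "chromatic_number E T = clique_number E T"
    using chromatic_number_le[OF assms(3)[OF T]] by simp
qed

section \<open>Induced embeddings\<close>

definition induced_embedding ::
    "('b \<Rightarrow> 'b \<Rightarrow> bool) \<Rightarrow> ('c \<Rightarrow> 'c \<Rightarrow> bool) \<Rightarrow> 'b set \<Rightarrow> ('b \<Rightarrow> 'c) \<Rightarrow> bool" where
  "induced_embedding E E' T f \<longleftrightarrow> inj_on f T \<and> (\<forall>x\<in>T. \<forall>y\<in>T. E' (f x) (f y) \<longleftrightarrow> E x y)"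

lemma induced_embedding_subset:
  "induced_embedding E E' T f \<Longrightarrow> U \<subseteq> T \<Longrightarrow> induced_embedding E E' U f"
  unfolding induced_embedding_def by (meson inj_on_subset subsetD)

lemma colorable_image_iff:
  assumes "induced_embedding E E' T f"
  shows "colorable E' (f ` T) k \<longleftrightarrow> colorable E T k"
proof
  assume "colorable E' (f ` T) k"
  then obtain c where "proper_coloring E' (f ` T) k c" unfolding colorable_def by blast
  then have "proper_coloring E T k (c \<circ> f)"
    using assms unfolding proper_coloring_def induced_embedding_def by auto
  then show "colorable E T k" unfolding colorable_def by blast
next
  assume "colorable E T k"
  then obtain c where "proper_coloring E T k c" unfolding colorable_def by blast
  then have "proper_coloring E' (f ` T) k (c \<circ> inv_into T f)"
    using assms unfolding proper_coloring_def induced_embedding_def by auto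
  then show "colorable E' (f ` T) k" unfolding colorable_def by blast
qed

lemma chromatic_number_image:
  assumes "induced_embedding E E' T f"
  shows "chromatic_number E' (f ` T) = chromatic_number E T"
proof -
  have "colorable E' (f ` T) = colorable E T" using colorable_image_iff[OF assms] by blast
  then show ?thesis unfolding chromatic_number_eq_Least by simp
qed

lemma clique_image_iff:
  assumes "induced_embedding E E' T f" "C \<subseteq> T"
  shows "clique E' (f ` C) \<longleftrightarrow> clique E C"
  using assms unfolding clique_def induced_embedding_def inj_on_def by (smt (verit, best) image_iff subsetD)

lemma clique_number_image:
  assumes "induced_embedding E E' T f"
  shows "clique_number E' (f ` T) = clique_number E T"
proof -
  have "card (f ` C) = card C" if "C \<subseteq> T" for C
    using that assms unfolding induced_embedding_def by (meson card_image inj_on_subset)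
  then have "{card C' | C'. C' \<subseteq> f ` T \<and> clique E' C'} = {card C | C. C \<subseteq> T \<and> clique E C}"
    using clique_image_iff[OF assms] by (auto simp: subset_image_iff) (metis order_refl)
  then show ?thesis unfolding clique_number_def by simp
qed

lemma perfect_on_image:
  assumes "induced_embedding E E' S f" "perfect_on E S"
  shows "perfect_on E' (f ` S)"
  unfolding perfect_on_def
proof (intro allI impI)
  fix T' assume "T' \<subseteq> f ` S"
  then obtain T where T: "T \<subseteq> S" "T' = f ` T" by (auto simp: subset_image_iff)
  then have emb: "induced_embedding E E' T f" using assms(1) induced_embedding_subset by blast
  show "chromatic_number E' T' = clique_number E' T'"
    using assms(2) T unfolding perfect_on_def T(2) chromatic_number_image[OF emb] clique_number_image[OF emb]
    by simp
qed

section \<open>Vertex replication\<close>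

lemma clique_insert_twin:
  assumes "simple_graph E" "clique E C" "v \<in> C" "E v v'"
    and twin: "\<And>x. x \<in> C \<Longrightarrow> x \<noteq> v \<Longrightarrow> E v' x \<longleftrightarrow> E v x"
  shows "clique E (insert v' C)"
proof -
  have adj: "E v' x" if "x \<in> C" for x
  proof (cases "x = v")
    case True
    then show ?thesis using simple_graph_sym[OF assms(1,4)] by simp
  next
    case False
    then have "E v x" using assms(2,3) that unfolding clique_def by auto
    then show ?thesis using twin[OF that False] by simp
  qed
  show ?thesis
    unfolding clique_def
  proof (intro ballI impI)
    fix x y assume xy: "x \<in> insert v' C" "y \<in> insert v' C" "x \<noteq> y"
    consider "x = v'" "y \<in> C" | "y = v'" "x \<in> C" | "x \<in> C" "y \<in> C" using xy by auto
    then show "E x y"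
    proof cases
      case 1
      then show ?thesis using adj by simp
    next
      case 2
      then show ?thesis using simple_graph_sym[OF assms(1) adj] by simp
    next
      case 3
      then show ?thesis using assms(2) xy(3) unfolding clique_def by simp
    qed
  qed
qed

lemma clique_number_remove_color_class_less:
  assumes "finite T" "proper_coloring E T (clique_number E T) c" "v \<in> T"
    and no_max: "\<And>C. C \<subseteq> T \<Longrightarrow> clique E C \<Longrightarrow> v \<in> C \<Longrightarrow> card C \<noteq> clique_number E T"
  shows "clique_number E (insert v {x\<in>T. c x \<noteq> c v}) < clique_number E T"
    (is "clique_number E ?T1 < _")
proof -
  have T1: "?T1 \<subseteq> T" using assms(3) by blast
  obtain C where C: "C \<subseteq> ?T1" "clique E C" "card C = clique_number E ?T1"
    using obtain_max_clique[OF finite_subset[OF T1 assms(1)]] .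
  have "card C \<noteq> clique_number E T"
  proof
    assume "card C = clique_number E T"
    then have "c ` C = {..<clique_number E T}"
      using proper_coloring_image_max_clique[OF assms(2)] C(1,2) T1 by blast
    moreover have "c v < clique_number E T" using assms(2,3) unfolding proper_coloring_def by blast
    ultimately obtain x where "x \<in> C" "c x = c v" by (metis imageE lessThan_iff)
    then have "v \<in> C" using C(1) by auto
    then show False using no_max C(1,2) T1 \<open>card C = clique_number E T\<close> by blast
  qed
  moreover have "card C \<le> clique_number E T" using card_le_clique_number[OF assms(1)] C(1,2) T1 by blast
  ultimately show ?thesis using C(3) by simp
qed

lemma clique_number_insert_twin_ge:
  assumes sg: "simple_graph E" and fin: "finite T" and v': "v' \<notin> T" and "E v v'"
    and twin: "\<And>x. x \<in> T \<Longrightarrow> x \<noteq> v \<Longrightarrow> E v' x \<longleftrightarrow> E v x"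
    and C: "C \<subseteq> T" "clique E C" "v \<in> C" "card C = clique_number E T"
  shows "Suc (clique_number E T) \<le> clique_number E (insert v' T)"
proof -
  have "clique E (insert v' C)" using clique_insert_twin[OF sg C(2,3) \<open>E v v'\<close>] twin C(1) by blast
  moreover have "card (insert v' C) = Suc (clique_number E T)"
    using C v' finite_subset[OF C(1) fin] by (subst card_insert_disjoint) auto
  ultimately show ?thesis
    using card_le_clique_number[of "insert v' T" "insert v' C" E] fin C(1) by auto
qed

lemma independent_insert_twin_color_class:
  assumes sg: "simple_graph E" and c: "proper_coloring E T k c" and v: "v \<in> T"
    and twin: "\<And>x. x \<in> T \<Longrightarrow> x \<noteq> v \<Longrightarrow> E v' x \<longleftrightarrow> E v x"
  shows "independent E (insert v' {x\<in>T. c x = c v \<and> x \<noteq> v})"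
proof -
  have "\<not> E v x" if "x \<in> T" "c x = c v" for x
    using c v that unfolding proper_coloring_def by metis
  then have "\<not> E v' x" "\<not> E x v'" if "x \<in> T" "c x = c v" "x \<noteq> v" for x
    using twin that simple_graph_sym[OF sg] by blast+
  moreover have "\<not> E x y" if "x \<in> T" "y \<in> T" "c x = c v" "c y = c v" for x y
    using c that unfolding proper_coloring_def by metis
  ultimately show ?thesis using simple_graph_irrefl[OF sg] unfolding independent_def by blast
qed

text \<open>If \<open>v\<close> lies in a maximum clique, \<open>v'\<close> raises both \<open>\<omega>\<close> and \<open>\<chi>\<close> by one. Otherwise recolour the
  colour class of \<open>v\<close> minus \<open>v\<close>, together with \<open>v'\<close>, by one new colour: the remaining graph has
  clique number below \<open>\<omega>\<close>, hence needs at most \<open>\<omega> - 1\<close> colours.\<close>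
lemma colorable_insert_twin:
  assumes sg: "simple_graph E" and fin: "finite T" and perf: "perfect_on E T"
    and v: "v \<in> T" and v': "v' \<notin> T" and "E v v'"
    and twin: "\<And>x. x \<in> T \<Longrightarrow> x \<noteq> v \<Longrightarrow> E v' x \<longleftrightarrow> E v x"
  shows "colorable E (insert v' T) (clique_number E (insert v' T))"
proof -
  have irr: "\<And>x. \<not> E x x" using sg by (rule simple_graph_irrefl)
  define \<omega> where "\<omega> = clique_number E T"
  obtain c where c: "proper_coloring E T \<omega> c"
    using perfect_on_colorable[OF perf order_refl fin irr] unfolding \<omega>_def colorable_def by blast
  have \<omega>_le: "\<omega> \<le> clique_number E (insert v' T)"
    unfolding \<omega>_def using fin by (intro clique_number_mono) auto
  show ?thesis
  proof (cases "\<exists>C. C \<subseteq> T \<and> clique E C \<and> v \<in> C \<and> card C = \<omega>")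
    case True
    then have "Suc \<omega> \<le> clique_number E (insert v' T)"
      using clique_number_insert_twin_ge[OF sg fin v' \<open>E v v'\<close> twin] unfolding \<omega>_def by blast
    moreover have "colorable E (T \<union> {v'}) (Suc \<omega>)"
    proof (rule colorable_Un_independent)
      show "colorable E T \<omega>" using c unfolding colorable_def by blast
      show "independent E {v'}" using irr unfolding independent_def by simp
    qed
    ultimately show ?thesis by (simp add: colorable_mono)
  next
    case False
    define T1 where "T1 = insert v {x\<in>T. c x \<noteq> c v}"
    have T1: "T1 \<subseteq> T" "finite T1" using v fin unfolding T1_def by auto
    have "clique_number E T1 < \<omega>"
      unfolding T1_def \<omega>_def using False c fin v
      by (intro clique_number_remove_color_class_less) (auto simp: \<omega>_def)
    moreover have "colorable E (T1 \<union> insert v' {x\<in>T. c x = c v \<and> x \<noteq> v}) (Suc (clique_number E T1))"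
      using perfect_on_colorable[OF perf T1 irr] independent_insert_twin_color_class[OF sg c v twin]
      by (rule colorable_Un_independent)
    moreover have "T1 \<union> insert v' {x\<in>T. c x = c v \<and> x \<noteq> v} = insert v' T"
      unfolding T1_def using v by auto
    ultimately show ?thesis using \<omega>_le by (auto elim!: colorable_mono)
  qed
qed

lemma induced_embedding_rename_twin:
  assumes sg: "simple_graph E" and "v \<notin> T"
    and twin: "\<And>x. x \<in> T \<Longrightarrow> x \<noteq> v' \<Longrightarrow> E v' x \<longleftrightarrow> E v x"
  shows "induced_embedding E E T (\<lambda>x. if x = v' then v else x)"
  unfolding induced_embedding_def
proof
  show "inj_on (\<lambda>x. if x = v' then v else x) T" using assms(2) unfolding inj_on_def by auto
  have "E y v \<longleftrightarrow> E y v'" if "y \<in> T" "y \<noteq> v'" for y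
    using twin[OF that] simple_graph_sym[OF sg] by blast
  then show "\<forall>x\<in>T. \<forall>y\<in>T. E (if x = v' then v else x) (if y = v' then v else y) \<longleftrightarrow> E x y"
    using twin simple_graph_irrefl[OF sg] by simp
qed

lemma perfect_on_insert_twin:
  assumes sg: "simple_graph E" and fin: "finite S" and perf: "perfect_on E S"
    and v: "v \<in> S" and v': "v' \<notin> S" and "E v v'"
    and twin: "\<And>x. x \<in> S \<Longrightarrow> x \<noteq> v \<Longrightarrow> E v' x \<longleftrightarrow> E v x"
  shows "perfect_on E (insert v' S)"
proof (rule perfect_onI)
  show "finite (insert v' S)" using fin by simp
  show irr: "\<And>x. \<not> E x x" using sg by (rule simple_graph_irrefl)
  fix T assume T: "T \<subseteq> insert v' S"
  have finT: "finite T" using T fin by (simp add: finite_subset)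
  consider "v' \<notin> T" | "v' \<in> T" "v \<notin> T" | "v' \<in> T" "v \<in> T" by blast
  then show "colorable E T (clique_number E T)"
  proof cases
    case 1
    then show ?thesis using perfect_on_colorable[OF perf _ finT irr] T by blast
  next
    case 2
    define f where "f x = (if x = v' then v else x)" for x
    have emb: "induced_embedding E E T f"
      unfolding f_def using T 2 by (intro induced_embedding_rename_twin[OF sg] twin) auto
    have "f ` T \<subseteq> S" using T v unfolding f_def by auto
    then have "colorable E (f ` T) (clique_number E (f ` T))"
      using perfect_on_colorable[OF perf _ _ irr] finT by blast
    then show ?thesis unfolding colorable_image_iff[OF emb] clique_number_image[OF emb] .
  next
    case 3
    then have T_eq: "T = insert v' (T - {v'})" by blast
    have "T - {v'} \<subseteq> S" using T by blast
    have "colorable E (insert v' (T - {v'})) (clique_number E (insert v' (T - {v'})))"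
    proof (rule colorable_insert_twin[OF sg _ _ _ _ \<open>E v v'\<close>])
      show "perfect_on E (T - {v'})" using perf \<open>T - {v'} \<subseteq> S\<close> by (rule perfect_on_subset)
      show "v \<in> T - {v'}" using 3 v v' by auto
    qed (use finT \<open>T - {v'} \<subseteq> S\<close> twin in auto)
    then show ?thesis using T_eq by simp
  qed
qed

definition blow_up :: "'b set \<Rightarrow> ('b \<Rightarrow> nat) \<Rightarrow> ('b \<times> nat) set" where
  "blow_up S h = Sigma S (\<lambda>u. {..<h u})"

definition blow_up_graph :: "('b \<Rightarrow> 'b \<Rightarrow> bool) \<Rightarrow> 'b \<times> nat \<Rightarrow> 'b \<times> nat \<Rightarrow> bool" where
  "blow_up_graph E p q \<longleftrightarrow> E (fst p) (fst q) \<or> (fst p = fst q \<and> snd p \<noteq> snd q)"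

lemma simple_graph_blow_up_graph: "simple_graph E \<Longrightarrow> simple_graph (blow_up_graph E)"
  unfolding simple_graph_def blow_up_graph_def by metis

lemma finite_blow_up: "finite S \<Longrightarrow> finite (blow_up S h)"
  unfolding blow_up_def by simp

lemma card_blow_up: "finite S \<Longrightarrow> card (blow_up S h) = sum h S"
  unfolding blow_up_def by simp

lemma blow_up_mono: "T \<subseteq> S \<Longrightarrow> (\<And>u. u \<in> T \<Longrightarrow> h u \<le> g u) \<Longrightarrow> blow_up T h \<subseteq> blow_up S g"
  unfolding blow_up_def by (fastforce intro: less_le_trans)

lemma perfect_on_blow_up_one:
  assumes "perfect_on E S"
  shows "perfect_on (blow_up_graph E) (blow_up S (\<lambda>_. 1))"
proof -
  have "induced_embedding E (blow_up_graph E) S (\<lambda>u. (u, 0))"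
    unfolding induced_embedding_def blow_up_graph_def inj_on_def by simp
  moreover have "blow_up S (\<lambda>_. 1) = (\<lambda>u. (u, 0)) ` S" unfolding blow_up_def by auto
  ultimately show ?thesis using perfect_on_image assms by metis
qed

lemma perfect_on_blow_up_Suc:
  assumes sg: "simple_graph E" and fin: "finite S" and u: "u \<in> S" "h u \<ge> 1"
    and perf: "perfect_on (blow_up_graph E) (blow_up S h)"
  shows "perfect_on (blow_up_graph E) (blow_up S (h(u := Suc (h u))))"
proof -
  have "blow_up S (h(u := Suc (h u))) = insert (u, h u) (blow_up S h)"
    unfolding blow_up_def using u by (auto simp: less_Suc_eq split: if_splits)
  moreover have "perfect_on (blow_up_graph E) (insert (u, h u) (blow_up S h))"
  proof (rule perfect_on_insert_twin[OF simple_graph_blow_up_graph[OF sg] finite_blow_up[OF fin] perf])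
    show "(u, 0) \<in> blow_up S h" "(u, h u) \<notin> blow_up S h"
      using u unfolding blow_up_def by auto
    show "blow_up_graph E (u, 0) (u, h u)" using u unfolding blow_up_graph_def by simp
    show "blow_up_graph E (u, h u) x \<longleftrightarrow> blow_up_graph E (u, 0) x"
      if "x \<in> blow_up S h" "x \<noteq> (u, 0)" for x
      using that simple_graph_irrefl[OF sg] unfolding blow_up_graph_def blow_up_def by auto
  qed
  ultimately show ?thesis by simp
qed

lemma perfect_on_blow_up:
  assumes sg: "simple_graph E" and fin: "finite S" and perf: "perfect_on E S"
  shows "perfect_on (blow_up_graph E) (blow_up S h)"
proof -
  have pos: "perfect_on (blow_up_graph E) (blow_up S g)" if "\<And>u. u \<in> S \<Longrightarrow> g u \<ge> 1" for g
    using that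
  proof (induction "sum g S" arbitrary: g rule: less_induct)
    case less
    show ?case
    proof (cases "\<forall>u\<in>S. g u = 1")
      case True
      have "blow_up S g = blow_up S (\<lambda>_. 1)" unfolding blow_up_def by (rule Sigma_cong) (simp_all add: True)
      then show ?thesis using perfect_on_blow_up_one[OF perf] by simp
    next
      case False
      then obtain u where "u \<in> S" "g u \<noteq> 1" by blast
      moreover have "g u \<ge> 1" using less.prems \<open>u \<in> S\<close> .
      ultimately have u: "u \<in> S" "g u \<ge> 2" by linarith+
      define g' where "g' = g(u := g u - 1)"
      have g: "g = g'(u := Suc (g' u))" unfolding g'_def using u by auto
      have "sum g' S < sum g S"
        unfolding g'_def using u fin by (simp add: sum.remove)
      moreover have "\<And>x. x \<in> S \<Longrightarrow> g' x \<ge> 1" unfolding g'_def using less.prems u by auto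
      ultimately have "perfect_on (blow_up_graph E) (blow_up S g')" by (rule less.hyps)
      then have "perfect_on (blow_up_graph E) (blow_up S (g'(u := Suc (g' u))))"
        using u unfolding g'_def by (intro perfect_on_blow_up_Suc[OF sg fin u(1)]) auto
      then show ?thesis using g by simp
    qed
  qed
  have "blow_up S h \<subseteq> blow_up S (\<lambda>u. max 1 (h u))" by (rule blow_up_mono) auto
  moreover have "perfect_on (blow_up_graph E) (blow_up S (\<lambda>u. max 1 (h u)))" by (rule pos) simp
  ultimately show ?thesis by (rule perfect_on_subset[rotated])
qed

lemma independence_number_blow_up_le:
  assumes "finite S"
  shows "independence_number (blow_up_graph E) (blow_up S h) \<le> independence_number E S"
proof -
  obtain I where I: "I \<subseteq> blow_up S h" "independent (blow_up_graph E) I"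
      "card I = independence_number (blow_up_graph E) (blow_up S h)"
    using obtain_max_independent[OF finite_blow_up[OF assms]] .
  have "inj_on fst I"
    using I(2) unfolding inj_on_def independent_def blow_up_graph_def by (metis prod.expand)
  moreover have "independent E (fst ` I)"
    using I(2) unfolding independent_def blow_up_graph_def by auto
  moreover have "fst ` I \<subseteq> S" using I(1) unfolding blow_up_def by auto
  ultimately show ?thesis
    using card_le_independence_number[OF assms] I(3) by (metis card_image)
qed

lemma clique_number_blow_up_le:
  assumes "finite S" "\<And>K. K \<subseteq> S \<Longrightarrow> clique E K \<Longrightarrow> sum h K \<le> b"
  shows "clique_number (blow_up_graph E) (blow_up S h) \<le> b"
proof -
  obtain C where C: "C \<subseteq> blow_up S h" "clique (blow_up_graph E) C"
      "card C = clique_number (blow_up_graph E) (blow_up S h)"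
    using obtain_max_clique[OF finite_blow_up[OF assms(1)]] .
  have K: "fst ` C \<subseteq> S" using C(1) unfolding blow_up_def by auto
  have "clique E (fst ` C)"
    using C(2) unfolding clique_def blow_up_graph_def by auto
  have "C \<subseteq> blow_up (fst ` C) h" using C(1) unfolding blow_up_def by force
  then have "card C \<le> card (blow_up (fst ` C) h)"
    using finite_blow_up finite_subset[OF K assms(1)] by (intro card_mono) auto
  also have "\<dots> = sum h (fst ` C)" using finite_subset[OF K assms(1)] by (rule card_blow_up)
  also have "\<dots> \<le> b" using assms(2) K \<open>clique E (fst ` C)\<close> .
  finally show ?thesis using C(3) by simp
qed

lemma sum_card_filter_swap:
  assumes "finite X" "finite \<K>"
  shows "(\<Sum>v\<in>X. card {K\<in>\<K>. v \<in> A K}) = (\<Sum>K\<in>\<K>. card (A K \<inter> X))"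
proof -
  have "(\<Sum>v\<in>X. card {K\<in>\<K>. v \<in> A K}) = (\<Sum>v\<in>X. \<Sum>K\<in>\<K>. if v \<in> A K then 1 else 0)"
    using assms(2) by (simp add: sum.If_cases Int_def)
  also have "\<dots> = (\<Sum>K\<in>\<K>. \<Sum>v\<in>X. if v \<in> A K then 1 else 0)" by (rule sum.swap)
  also have "\<dots> = (\<Sum>K\<in>\<K>. card (A K \<inter> X))"
    using assms(1) by (simp add: sum.If_cases Int_commute)
  finally show ?thesis .
qed

text \<open>Weighted form of \<open>|V| \<le> \<omega> \<alpha>\<close>, obtained by applying it to the blow-up.\<close>
lemma perfect_on_sum_le_mult_independence_number:
  assumes sg: "simple_graph E" and fin: "finite S" and perf: "perfect_on E S"
    and bound: "\<And>K. K \<subseteq> S \<Longrightarrow> clique E K \<Longrightarrow> sum h K \<le> b"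
  shows "sum h S \<le> b * independence_number E S"
proof -
  let ?G = "blow_up_graph E" and ?B = "blow_up S h"
  have "sum h S = card ?B" by (rule card_blow_up[OF fin, symmetric])
  also have "\<dots> \<le> chromatic_number ?G ?B * independence_number ?G ?B"
    using finite_blow_up[OF fin] simple_graph_irrefl[OF simple_graph_blow_up_graph[OF sg]]
    by (intro card_le_colorable_mult_independence_number colorable_chromatic_number)
  also have "\<dots> = clique_number ?G ?B * independence_number ?G ?B"
    using perfect_on_blow_up[OF sg fin perf, of h] unfolding perfect_on_def by simp
  also have "\<dots> \<le> b * independence_number E S"
    using clique_number_blow_up_le[OF fin bound] independence_number_blow_up_le[OF fin]
    by (rule mult_le_mono)
  finally show ?thesis .
qed

text \<open>Lov\'asz's argument: if not, choose, for every clique \<open>K\<close>, a maximum independent set \<open>A K\<close>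
  avoiding it, and weight each vertex by the number of these sets containing it. The total weight
  is \<open>m \<alpha>\<close> (\<open>m\<close> the number of cliques) while every clique has weight at most \<open>m - 1\<close>.\<close>
lemma perfect_on_clique_meets_max_independent_sets:
  assumes sg: "simple_graph E" and fin: "finite S" and "S \<noteq> {}" and perf: "perfect_on E S"
  obtains K where "K \<subseteq> S" "clique E K"
    "\<And>A. A \<subseteq> S \<Longrightarrow> independent E A \<Longrightarrow> card A = independence_number E S \<Longrightarrow> A \<inter> K \<noteq> {}"
proof (rule ccontr)
  define \<alpha> where "\<alpha> = independence_number E S"
  define \<K> where "\<K> = {K. K \<subseteq> S \<and> clique E K}"
  define m where "m = card \<K>"
  assume "\<not> thesis"
  then have "\<forall>K\<in>\<K>. \<exists>A. A \<subseteq> S \<and> independent E A \<and> card A = \<alpha> \<and> A \<inter> K = {}"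
    using that unfolding \<K>_def \<alpha>_def by blast
  then obtain A where A: "\<And>K. K \<in> \<K> \<Longrightarrow> A K \<subseteq> S \<and> independent E (A K) \<and> card (A K) = \<alpha> \<and> A K \<inter> K = {}"
    by metis
  have fin\<K>: "finite \<K>" unfolding \<K>_def using fin by simp
  have "{} \<in> \<K>" unfolding \<K>_def clique_def by simp
  then have "m \<ge> 1" unfolding m_def using fin\<K> by (metis card_0_eq empty_iff less_one not_le)
  have "\<alpha> \<ge> 1"
    unfolding \<alpha>_def using \<open>S \<noteq> {}\<close> independence_number_pos[OF fin] simple_graph_irrefl[OF sg] by blast
  define h where "h v = card {K\<in>\<K>. v \<in> A K}" for v
  have sum_h: "sum h X = (\<Sum>K\<in>\<K>. card (A K \<inter> X))" if "X \<subseteq> S" for X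
    unfolding h_def using finite_subset[OF that fin] fin\<K> by (rule sum_card_filter_swap)
  have "sum h S = m * \<alpha>"
  proof -
    have "sum h S = (\<Sum>K\<in>\<K>. \<alpha>)"
      unfolding sum_h[OF order_refl] using A by (intro sum.cong) (auto simp: Int_absorb2)
    then show ?thesis unfolding m_def by simp
  qed
  moreover have "sum h S \<le> (m - 1) * \<alpha>"
    unfolding \<alpha>_def
  proof (rule perfect_on_sum_le_mult_independence_number[OF sg fin perf])
    fix K assume K: "K \<subseteq> S" "clique E K"
    then have "K \<in> \<K>" unfolding \<K>_def by simp
    have "sum h K = (\<Sum>L\<in>\<K> - {K}. card (A L \<inter> K))"
      using sum_h[OF K(1)] A[OF \<open>K \<in> \<K>\<close>] fin\<K> \<open>K \<in> \<K>\<close> by (simp add: sum.remove Int_commute)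
    also have "\<dots> \<le> (\<Sum>L\<in>\<K> - {K}. 1)"
      using A K(2) card_independent_Int_clique_le_1 by (intro sum_mono) blast
    also have "\<dots> = m - 1" unfolding m_def using fin\<K> \<open>K \<in> \<K>\<close> by simp
    finally show "sum h K \<le> m - 1" .
  qed
  ultimately show False using \<open>m \<ge> 1\<close> \<open>\<alpha> \<ge> 1\<close> by simp
qed

section \<open>Partitions of perfect graphs into maximum cliques\<close>

lemma card_independent_le_card_clique_partition:
  assumes "finite S" "\<Union>\<C> = S" "disjoint \<C>" "\<And>C. C \<in> \<C> \<Longrightarrow> clique E C"
    and "A \<subseteq> S" "independent E A"
  shows "card A \<le> card \<C>"
proof -
  have fin: "finite \<C>" using assms(1,2) finite_UnionD by blast
  have "A = (\<Union>C\<in>\<C>. A \<inter> C)" using assms(2,5) by blast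
  also have "card \<dots> = (\<Sum>C\<in>\<C>. card (A \<inter> C))"
  proof (rule card_UN_disjoint[OF fin])
    show "\<forall>C\<in>\<C>. finite (A \<inter> C)" using finite_subset[OF assms(5,1)] by simp
    show "\<forall>C\<in>\<C>. \<forall>D\<in>\<C>. C \<noteq> D \<longrightarrow> A \<inter> C \<inter> (A \<inter> D) = {}"
      using disjointD[OF assms(3)] by blast
  qed
  also have "\<dots> \<le> (\<Sum>C\<in>\<C>. 1)"
    using card_independent_Int_clique_le_1[OF assms(6) assms(4)] by (intro sum_mono) blast
  finally show ?thesis by simp
qed

lemma card_clique_partition:
  assumes "finite S" "\<Union>\<C> = S" "disjoint \<C>" "\<And>C. C \<in> \<C> \<Longrightarrow> card C = k"
  shows "card S = card \<C> * k"
proof -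
  have "card S = sum card \<C>"
    unfolding assms(2)[symmetric] using assms(1,2)
    by (intro card_Union_disjoint[OF assms(3)]) (auto intro: finite_subset)
  then show ?thesis using assms(4) by simp
qed

lemma independence_number_Diff_less:
  assumes "finite S"
    and meets: "\<And>A. A \<subseteq> S \<Longrightarrow> independent E A \<Longrightarrow> card A = independence_number E S \<Longrightarrow> A \<inter> K \<noteq> {}"
  shows "independence_number E (S - K) < independence_number E S"
proof -
  obtain A where A: "A \<subseteq> S - K" "independent E A" "card A = independence_number E (S - K)"
    using obtain_max_independent[of "S - K" E] assms(1) by auto
  then have "card A \<le> independence_number E S" "card A \<noteq> independence_number E S"
    using card_le_independence_number[OF assms(1)] meets by blast+
  then show ?thesis using A(3) by simp
qed

text \<open>With \<open>K\<close> from Lov\'asz's lemma, \<open>(\<alpha> - 1) \<omega> \<le> |S - K| \<le> \<alpha>(S - K) \<omega>(S - K) \<le> (\<alpha> - 1) \<omega>\<close>,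
  so equality holds throughout.\<close>
lemma perfect_on_remove_max_clique:
  assumes sg: "simple_graph E" and fin: "finite S" and perf: "perfect_on E S" and "S \<noteq> {}"
    and tight: "card S = independence_number E S * clique_number E S"
  obtains K where "K \<subseteq> S" "clique E K" "card K = clique_number E S"
    "card (S - K) = independence_number E (S - K) * clique_number E (S - K)"
    "S - K \<noteq> {} \<Longrightarrow> clique_number E (S - K) = clique_number E S"
proof -
  define \<alpha> where "\<alpha> = independence_number E S"
  define \<omega> where "\<omega> = clique_number E S"
  obtain K where K: "K \<subseteq> S" "clique E K"
    "\<And>A. A \<subseteq> S \<Longrightarrow> independent E A \<Longrightarrow> card A = \<alpha> \<Longrightarrow> A \<inter> K \<noteq> {}"
    using perfect_on_clique_meets_max_independent_sets[OF sg fin \<open>S \<noteq> {}\<close> perf] unfolding \<alpha>_def by blast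
  define \<alpha>' where "\<alpha>' = independence_number E (S - K)"
  define \<omega>' where "\<omega>' = clique_number E (S - K)"
  have irr: "\<And>x. \<not> E x x" using sg by (rule simple_graph_irrefl)
  have "\<alpha>' < \<alpha>"
    unfolding \<alpha>'_def \<alpha>_def by (rule independence_number_Diff_less[OF fin K(3)[unfolded \<alpha>_def]])
  then have "\<alpha>' \<le> \<alpha> - 1" by simp
  moreover have "\<omega>' \<le> \<omega>" unfolding \<omega>'_def \<omega>_def using fin by (intro clique_number_mono) auto
  moreover have "card (S - K) \<le> \<omega>' * \<alpha>'"
    using card_le_colorable_mult_independence_number[of "S - K"] fin
      perfect_on_colorable[OF perf _ _ irr, of "S - K"] unfolding \<omega>'_def \<alpha>'_def by auto
  moreover have "card (S - K) = \<alpha> * \<omega> - card K"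
    using tight K(1) finite_subset[OF K(1) fin] unfolding \<alpha>_def \<omega>_def by (simp add: card_Diff_subset)
  moreover have "card K \<le> \<omega>" unfolding \<omega>_def using card_le_clique_number[OF fin K(1,2)] .
  moreover have "\<alpha> \<ge> 1"
    using \<open>S \<noteq> {}\<close> independence_number_pos[OF fin] irr unfolding \<alpha>_def by blast
  moreover have "(\<alpha> - 1) * \<omega> = \<alpha> * \<omega> - \<omega>" "\<omega> \<le> \<alpha> * \<omega>"
    using \<open>\<alpha> \<ge> 1\<close> by (simp_all add: diff_mult_distrib)
  moreover have "\<alpha>' * \<omega>' \<le> \<alpha>' * \<omega>" "\<alpha>' * \<omega> \<le> (\<alpha> - 1) * \<omega>"
    using \<open>\<omega>' \<le> \<omega>\<close> \<open>\<alpha>' \<le> \<alpha> - 1\<close> by simp_all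
  moreover have "\<omega>' * \<alpha>' = \<alpha>' * \<omega>'" by (rule mult.commute)
  ultimately have eq: "card K = \<omega>" "card (S - K) = \<alpha>' * \<omega>'" "\<alpha>' * \<omega>' = \<alpha>' * \<omega>"
    by linarith+
  have "\<omega>' = \<omega>" if "S - K \<noteq> {}"
  proof -
    have "\<alpha>' \<ge> 1" using that independence_number_pos[of "S - K"] fin irr unfolding \<alpha>'_def by blast
    then show ?thesis using eq(3) by simp
  qed
  then show ?thesis using that K(1,2) eq(1,2) unfolding \<alpha>'_def \<omega>'_def \<omega>_def by blast
qed

lemma perfect_on_max_clique_partition:
  assumes sg: "simple_graph E" and "finite S" "perfect_on E S"
    and "card S = independence_number E S * clique_number E S"
  shows "\<exists>\<C>. \<Union>\<C> = S \<and> disjoint \<C> \<and> (\<forall>C\<in>\<C>. clique E C \<and> card C = clique_number E S)"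
  using assms(2-)
proof (induction "card S" arbitrary: S rule: less_induct)
  case less
  note fin = less.prems(1) and perf = less.prems(2)
  show ?case
  proof (cases "S = {}")
    case True
    then show ?thesis by auto
  next
    case False
    obtain K where K: "K \<subseteq> S" "clique E K" "card K = clique_number E S"
      and rest: "card (S - K) = independence_number E (S - K) * clique_number E (S - K)"
        "S - K \<noteq> {} \<Longrightarrow> clique_number E (S - K) = clique_number E S"
      using perfect_on_remove_max_clique[OF sg fin perf False less.prems(3)] by blast
    show ?thesis
    proof (cases "S - K = {}")
      case True
      then show ?thesis using K by (intro exI[of _ "{K}"]) auto
    next
      case False
      obtain x where "x \<in> S" using \<open>S \<noteq> {}\<close> by blast
      then have "K \<noteq> {}" using K(3) clique_number_pos[OF fin, of x E] by auto
      then have "card (S - K) < card S" using fin K(1) by (intro psubset_card_mono) auto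
      then obtain \<C> where \<C>: "\<Union>\<C> = S - K" "disjoint \<C>"
          "\<forall>C\<in>\<C>. clique E C \<and> card C = clique_number E S"
        using less.hyps[OF _ _ perfect_on_subset[OF perf] rest(1)] fin rest(2)[OF False] by auto
      have "\<Union>(insert K \<C>) = S" using \<C>(1) K(1) by auto
      moreover have "disjoint (insert K \<C>)"
        using \<C>(1,2) unfolding disjoint_def by (auto simp: pairwise_insert disjnt_def)
      ultimately show ?thesis using \<C>(3) K(2,3) by blast
    qed
  qed
qed

lemma perfect_on_max_clique_partition_iff:
  assumes sg: "simple_graph E" and fin: "finite S" and perf: "perfect_on E S"
  shows "(\<exists>\<C>. \<Union>\<C> = S \<and> disjoint \<C> \<and> (\<forall>C\<in>\<C>. clique E C \<and> card C = clique_number E S))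
    \<longleftrightarrow> independence_number E S * clique_number E S \<le> card S"
proof
  assume "\<exists>\<C>. \<Union>\<C> = S \<and> disjoint \<C> \<and> (\<forall>C\<in>\<C>. clique E C \<and> card C = clique_number E S)"
  then obtain \<C> where \<C>: "\<Union>\<C> = S" "disjoint \<C>" "\<And>C. C \<in> \<C> \<Longrightarrow> clique E C"
      "\<And>C. C \<in> \<C> \<Longrightarrow> card C = clique_number E S" by blast
  obtain A where "A \<subseteq> S" "independent E A" "card A = independence_number E S"
    using obtain_max_independent[OF fin] .
  then have "independence_number E S \<le> card \<C>"
    using card_independent_le_card_clique_partition[OF fin \<C>(1-3)] by metis
  then show "independence_number E S * clique_number E S \<le> card S"
    using card_clique_partition[OF fin \<C>(1,2,4)] by simp
next
  assume "independence_number E S * clique_number E S \<le> card S"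
  moreover have "card S \<le> clique_number E S * independence_number E S"
    using card_le_colorable_mult_independence_number[OF fin]
      perfect_on_colorable[OF perf order_refl fin simple_graph_irrefl[OF sg]] by blast
  ultimately show "\<exists>\<C>. \<Union>\<C> = S \<and> disjoint \<C> \<and> (\<forall>C\<in>\<C>. clique E C \<and> card C = clique_number E S)"
    by (intro perfect_on_max_clique_partition[OF sg fin perf]) (simp add: mult.commute)
qed

section \<open>Graph entropy\<close>

lemma indicator_in_VP: "independent E S \<Longrightarrow> (\<chi> i. if i \<in> S then 1 else 0) \<in> VP E"
  unfolding VP_def by (rule hull_inc) blast

lemma VP_sum_le:
  fixes E :: "'a::finite \<Rightarrow> 'a \<Rightarrow> bool"
  assumes "x \<in> VP E" "\<And>S. independent E S \<Longrightarrow> real (card (S \<inter> I)) \<le> c"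
  shows "(\<Sum>i\<in>I. x $ i) \<le> c"
proof -
  define u :: "real^'a" where "u = (\<chi> i. if i \<in> I then 1 else 0)"
  have inner_u: "inner u y = (\<Sum>i\<in>I. y $ i)" for y
  proof -
    have "inner u y = (\<Sum>i\<in>UNIV. if i \<in> I then y $ i else 0)"
      unfolding u_def inner_vec_def by (intro sum.cong) auto
    then show ?thesis by (simp add: sum.If_cases)
  qed
  have "VP E \<subseteq> {y. inner u y \<le> c}"
    unfolding VP_def
  proof (rule hull_minimal)
    show "{(\<chi> i. if i \<in> S then 1 else 0) | S. independent E S} \<subseteq> {y. inner u y \<le> c}"
      using assms(2) by (auto simp: inner_u sum.If_cases Int_commute)
  qed (rule convex_halfspace_le)
  then show ?thesis using assms(1) inner_u by auto
qed

lemma VP_component_le_1: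
  fixes E :: "'a::finite \<Rightarrow> 'a \<Rightarrow> bool"
  assumes "x \<in> VP E"
  shows "x $ i \<le> 1"
proof -
  have "real (card (S \<inter> {i})) \<le> 1" for S :: "'a set"
    by (cases "i \<in> S") auto
  then show ?thesis using VP_sum_le[OF assms, of "{i}" 1] by simp
qed

text \<open>Averaging the colour classes of a \<open>k\<close>-colouring.\<close>
lemma constant_in_VP:
  fixes E :: "'a::finite \<Rightarrow> 'a \<Rightarrow> bool"
  assumes "colorable E UNIV k" "k \<ge> 1"
  shows "(\<chi> i. 1 / real k) \<in> VP E"
proof -
  obtain c where c: "proper_coloring E UNIV k c" using assms(1) unfolding colorable_def by blast
  define y :: "nat \<Rightarrow> real ^ 'a" where "y j = (\<chi> i. if i \<in> {x. c x = j} then 1 else 0)" for j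
  have "(\<Sum>j<k. (1 / real k) *\<^sub>R y j) \<in> VP E"
    unfolding VP_def
  proof (rule convex_sum[OF _ convex_convex_hull])
    show "(\<Sum>j<k. 1 / real k) = 1" using assms(2) by simp
    fix j
    have "independent E {x. c x = j}"
      using independent_color_class[OF c, of j] by simp
    then show "y j \<in> convex hull {(\<chi> i. if i \<in> S then 1 else 0) | S. independent E S}"
      unfolding y_def by (intro hull_inc) blast
  qed auto
  moreover have "(\<Sum>j<k. (1 / real k) *\<^sub>R y j) = (\<chi> i. 1 / real k)"
    using c unfolding y_def proper_coloring_def
    by (simp add: vec_eq_iff sum_component sum_divide_distrib[symmetric])
  ultimately show ?thesis by simp
qed

definition feasible :: "('a::finite \<Rightarrow> 'a \<Rightarrow> bool) \<Rightarrow> real ^ 'a \<Rightarrow> (real ^ 'a) set" where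
  "feasible E P = {a \<in> VP E. \<forall>i. P $ i > 0 \<longrightarrow> a $ i > 0}"

definition entropy_obj :: "real ^ ('a::finite) \<Rightarrow> real ^ 'a \<Rightarrow> real" where
  "entropy_obj P a = (\<Sum>i\<in>UNIV. P $ i * log 2 (1 / a $ i))"

definition uniform_on :: "'a::finite set \<Rightarrow> real ^ 'a" where
  "uniform_on I = (\<chi> i. if i \<in> I then 1 / real (card I) else 0)"

lemma graph_entropy_eq_Inf: "graph_entropy E P = Inf (entropy_obj P ` feasible E P)"
  unfolding graph_entropy_def entropy_obj_def feasible_def ..

lemma uniform_dist_eq_uniform_on_UNIV: "uniform_dist = uniform_on UNIV"
  unfolding uniform_dist_def uniform_on_def by simp

lemma prob_dist_uniform_on: "I \<noteq> {} \<Longrightarrow> prob_dist (uniform_on I)"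
  unfolding prob_dist_def uniform_on_def by (simp add: sum.If_cases)

lemma constant_feasible:
  "colorable E UNIV k \<Longrightarrow> k \<ge> 1 \<Longrightarrow> (\<chi> i. 1 / real k) \<in> feasible E P"
  unfolding feasible_def using constant_in_VP by auto

lemma entropy_obj_nonneg:
  assumes "\<forall>i. P $ i \<ge> 0" "a \<in> feasible E P"
  shows "entropy_obj P a \<ge> 0"
  unfolding entropy_obj_def
proof (rule sum_nonneg)
  fix i
  show "0 \<le> P $ i * log 2 (1 / a $ i)"
  proof (cases "P $ i > 0")
    case True
    then have "0 < a $ i" "a $ i \<le> 1" using assms(2) VP_component_le_1 unfolding feasible_def by auto
    then show ?thesis using True by simp
  next
    case False
    then have "P $ i = 0" using assms(1)[rule_format, of i] by linarith
    then show ?thesis by simp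
  qed
qed

lemma graph_entropy_le:
  assumes "\<forall>i. P $ i \<ge> 0" "a \<in> feasible E P"
  shows "graph_entropy E P \<le> entropy_obj P a"
proof -
  have "bdd_below (entropy_obj P ` feasible E P)"
    using entropy_obj_nonneg[OF assms(1)] by (intro bdd_belowI[of _ 0]) auto
  then show ?thesis unfolding graph_entropy_eq_Inf using assms(2) by (intro cInf_lower) auto
qed

lemma graph_entropy_ge:
  assumes "feasible E P \<noteq> {}" "\<And>a. a \<in> feasible E P \<Longrightarrow> b \<le> entropy_obj P a"
  shows "b \<le> graph_entropy E P"
  unfolding graph_entropy_eq_Inf using assms by (intro cInf_greatest) auto

lemma graph_entropy_le_log_colors:
  assumes "colorable E UNIV k" "k \<ge> 1" "prob_dist P"
  shows "graph_entropy E P \<le> log 2 (real k)"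
proof -
  have "graph_entropy E P \<le> entropy_obj P (\<chi> i. 1 / real k)"
    using assms constant_feasible unfolding prob_dist_def by (intro graph_entropy_le) auto
  also have "\<dots> = log 2 (real k)"
    using assms(2,3) unfolding entropy_obj_def prob_dist_def by (simp add: sum_distrib_right[symmetric])
  finally show ?thesis .
qed

lemma entropy_obj_uniform_on:
  assumes "I \<noteq> {}" "\<forall>i\<in>I. a $ i > 0" "w > 0"
  shows "entropy_obj (uniform_on I) a = log 2 w - (\<Sum>i\<in>I. ln (w * a $ i)) / (real (card I) * ln 2)"
proof -
  have card: "real (card I) > 0" using assms(1) by (simp add: card_gt_0_iff)
  have "entropy_obj (uniform_on I) a = (\<Sum>i\<in>UNIV. if i \<in> I then log 2 (1 / a $ i) / real (card I) else 0)"
    unfolding entropy_obj_def uniform_on_def by (intro sum.cong) auto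
  also have "\<dots> = (\<Sum>i\<in>I. log 2 (1 / a $ i) / real (card I))" by (simp add: sum.If_cases)
  also have "\<dots> = (\<Sum>i\<in>I. (log 2 w - ln (w * a $ i) / ln 2) / real (card I))"
  proof (intro sum.cong refl)
    fix i assume "i \<in> I"
    then have "a $ i > 0" using assms(2) by blast
    then show "log 2 (1 / a $ i) / real (card I) = (log 2 w - ln (w * a $ i) / ln 2) / real (card I)"
      using assms(3) by (simp add: log_def ln_mult ln_div field_simps)
  qed
  also have "\<dots> = real (card I) * (log 2 w / real (card I)) - (\<Sum>i\<in>I. ln (w * a $ i)) / (real (card I) * ln 2)"
    by (simp add: diff_divide_distrib sum_subtractf sum_divide_distrib mult.commute)
  also have "\<dots> = log 2 w - (\<Sum>i\<in>I. ln (w * a $ i)) / (real (card I) * ln 2)"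
    using assms(1) by simp
  finally show ?thesis .
qed

lemma log_le_entropy_obj_uniform_on:
  assumes "I \<noteq> {}" "w > 0" "\<forall>i\<in>I. a $ i > 0" "(\<Sum>i\<in>I. a $ i) * w \<le> real (card I)"
  shows "log 2 w \<le> entropy_obj (uniform_on I) a"
proof -
  have "(\<Sum>i\<in>I. ln (w * a $ i)) \<le> (\<Sum>i\<in>I. w * a $ i - 1)"
    using assms(2,3) by (intro sum_mono ln_le_minus_one) auto
  also have "\<dots> = (\<Sum>i\<in>I. a $ i) * w - real (card I)"
    by (simp add: sum_subtractf sum_distrib_left mult.commute)
  also have "\<dots> \<le> 0" using assms(4) by simp
  finally have "(\<Sum>i\<in>I. ln (w * a $ i)) / (real (card I) * ln 2) \<le> 0"
    using assms(1) by (intro divide_nonpos_pos) (auto simp: card_gt_0_iff)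
  then show ?thesis unfolding entropy_obj_uniform_on[OF assms(1,3,2)] by simp
qed

lemma entropy_obj_uniform_on_less_log:
  assumes "I \<noteq> {}" "w > 0" "\<forall>i\<in>I. a $ i > 0" "(\<Sum>i\<in>I. ln (w * a $ i)) > 0"
  shows "entropy_obj (uniform_on I) a < log 2 w"
proof -
  have "(\<Sum>i\<in>I. ln (w * a $ i)) / (real (card I) * ln 2) > 0"
    using assms(1,4) by (simp add: card_gt_0_iff)
  then show ?thesis unfolding entropy_obj_uniform_on[OF assms(1,3,2)] by simp
qed

lemma log_le_graph_entropy_uniform_on:
  fixes E :: "'a::finite \<Rightarrow> 'a \<Rightarrow> bool"
  assumes col: "colorable E UNIV w" and "w \<ge> 1" and "I \<noteq> {}"
    and bound: "\<And>S. independent E S \<Longrightarrow> card (S \<inter> I) * w \<le> card I"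
  shows "log 2 w \<le> graph_entropy E (uniform_on I)"
proof (rule graph_entropy_ge)
  show "feasible E (uniform_on I) \<noteq> {}" using constant_feasible[OF col \<open>w \<ge> 1\<close>] by blast
  fix a assume a: "a \<in> feasible E (uniform_on I)"
  have "(\<Sum>i\<in>I. a $ i) \<le> real (card I) / w"
  proof (rule VP_sum_le)
    show "a \<in> VP E" using a unfolding feasible_def by simp
    fix S assume "independent E S"
    then have "real (card (S \<inter> I)) * w \<le> real (card I)" using bound of_nat_mono by fastforce
    then show "real (card (S \<inter> I)) \<le> real (card I) / w" using \<open>w \<ge> 1\<close> by (simp add: field_simps)
  qed
  moreover have "\<forall>i\<in>I. a $ i > 0"
    using a \<open>I \<noteq> {}\<close> unfolding feasible_def uniform_on_def by (auto simp: card_gt_0_iff)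
  ultimately show "log 2 w \<le> entropy_obj (uniform_on I) a"
    using \<open>I \<noteq> {}\<close> \<open>w \<ge> 1\<close> by (intro log_le_entropy_obj_uniform_on) (auto simp: field_simps)
qed

text \<open>The derivative at \<open>t = 0\<close> of the expression below is \<open>s w - n > 0\<close>.\<close>
lemma exists_mixture_weight:
  fixes s n w :: real
  assumes "n < s * w"
  shows "\<exists>t. 0 < t \<and> t < 1 \<and> 0 < s * ln (1 + t * (w - 1)) + (n - s) * ln (1 - t)"
proof -
  define f where "f t = s * ln (1 + t * (w - 1)) + (n - s) * ln (1 - t)" for t
  have "DERIV f 0 :> s * w - n"
    unfolding f_def by (rule derivative_eq_intros refl | simp)+ (simp add: algebra_simps)
  then obtain d where d: "d > 0" "\<And>h. 0 < h \<Longrightarrow> h < d \<Longrightarrow> f 0 < f (0 + h)"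
    using DERIV_pos_inc_right assms by (metis diff_gt_0_iff_gt)
  define t where "t = min (d / 2) (1 / 2)"
  have "0 < t" "t < d" "t < 1" unfolding t_def using d(1) by auto
  then show ?thesis using d(2)[of t] unfolding f_def by auto
qed

text \<open>Shifting a little weight from \<open>(1/w, \<dots>, 1/w)\<close> towards the indicator vector of \<open>S\<close>
  pushes the uniform objective below \<open>log w\<close>.\<close>
lemma graph_entropy_uniform_less_log:
  fixes E :: "'a::finite \<Rightarrow> 'a \<Rightarrow> bool"
  assumes col: "colorable E UNIV w" and "w \<ge> 1" and S: "independent E S"
    and big: "CARD('a) < card S * w"
  shows "graph_entropy E (uniform_on UNIV) < log 2 (real w)"
proof -
  define n where "n = real CARD('a)"
  define s where "s = real (card S)"
  define r where "r = real w"
  have "n < s * r" "r \<ge> 1"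
    unfolding n_def s_def r_def using big \<open>w \<ge> 1\<close> by (simp_all flip: of_nat_mult)
  then obtain t where t: "0 < t" "t < 1" "0 < s * ln (1 + t * (r - 1)) + (n - s) * ln (1 - t)"
    using exists_mixture_weight by blast
  define a :: "real ^ 'a" where
    "a = (1 - t) *\<^sub>R (\<chi> i. 1 / r) + t *\<^sub>R (\<chi> i. if i \<in> S then 1 else 0)"
  have "a \<in> VP E"
    unfolding a_def using constant_in_VP[OF col \<open>w \<ge> 1\<close>] indicator_in_VP[OF S] t(1,2)
    unfolding r_def VP_def by (intro convexD[OF convex_convex_hull]) auto
  have ra: "r * a $ i = (if i \<in> S then 1 + t * (r - 1) else 1 - t)" for i
    unfolding a_def using \<open>r \<ge> 1\<close> by (simp add: field_simps)
  have pos: "\<forall>i\<in>UNIV. a $ i > 0"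
  proof
    fix i :: 'a
    have "r * a $ i > 0" unfolding ra using t(1,2) \<open>r \<ge> 1\<close> by (simp add: add_pos_nonneg)
    then show "a $ i > 0" using \<open>r \<ge> 1\<close> by (simp add: zero_less_mult_iff)
  qed
  have "(\<Sum>i\<in>UNIV. ln (r * a $ i)) = s * ln (1 + t * (r - 1)) + (n - s) * ln (1 - t)"
  proof -
    have "card (- S) = CARD('a) - card S"
      unfolding Compl_eq_Diff_UNIV by (rule card_Diff_subset) auto
    moreover have "card S \<le> CARD('a)" by (rule card_mono) auto
    ultimately show ?thesis
      unfolding ra s_def n_def by (simp add: if_distrib sum.If_cases of_nat_diff Compl_eq)
  qed
  then have "entropy_obj (uniform_on UNIV) a < log 2 r"
    using t(3) pos \<open>r \<ge> 1\<close> by (intro entropy_obj_uniform_on_less_log) auto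
  moreover have "a \<in> feasible E (uniform_on UNIV)"
    using \<open>a \<in> VP E\<close> pos unfolding feasible_def by simp
  ultimately show ?thesis
    using graph_entropy_le[of "uniform_on UNIV" a E] unfolding uniform_on_def r_def by simp
qed

lemma entropy_symmetric_iff:
  fixes E :: "'a::finite \<Rightarrow> 'a \<Rightarrow> bool"
  assumes sg: "simple_graph E" and "chromatic_number E UNIV = clique_number E UNIV"
  shows "entropy_symmetric E \<longleftrightarrow> independence_number E UNIV * clique_number E UNIV \<le> CARD('a)"
proof -
  define \<omega> where "\<omega> = clique_number E UNIV"
  have col: "colorable E UNIV \<omega>"
    using colorable_chromatic_number[of UNIV E] simple_graph_irrefl[OF sg] assms(2)
    unfolding \<omega>_def by simp
  have "\<omega> \<ge> 1" unfolding \<omega>_def by (rule clique_number_pos) auto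
  note lower = log_le_graph_entropy_uniform_on[OF col \<open>\<omega> \<ge> 1\<close>]
  show ?thesis
    unfolding \<omega>_def[symmetric]
  proof
    assume sym: "entropy_symmetric E"
    show "independence_number E UNIV * \<omega> \<le> CARD('a)"
    proof (rule ccontr)
      assume "\<not> ?thesis"
      moreover obtain A where "independent E A" "card A = independence_number E UNIV"
        using obtain_max_independent[of UNIV E] by auto
      ultimately have "graph_entropy E uniform_dist < log 2 \<omega>"
        unfolding uniform_dist_eq_uniform_on_UNIV
        using graph_entropy_uniform_less_log[OF col \<open>\<omega> \<ge> 1\<close>] by (simp add: not_le)
      moreover obtain K where K: "clique E K" "card K = \<omega>"
        using obtain_max_clique[of UNIV E] unfolding \<omega>_def by auto
      then have "log 2 \<omega> \<le> graph_entropy E (uniform_on K)"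
        using card_independent_Int_clique_le_1 \<open>\<omega> \<ge> 1\<close> by (intro lower) auto
      moreover have "K \<noteq> {}" using K(2) \<open>\<omega> \<ge> 1\<close> by auto
      then have "graph_entropy E (uniform_on K) \<le> graph_entropy E uniform_dist"
        using sym prob_dist_uniform_on unfolding entropy_symmetric_def by blast
      ultimately show False by simp
    qed
  next
    assume "independence_number E UNIV * \<omega> \<le> CARD('a)"
    then have "log 2 \<omega> \<le> graph_entropy E uniform_dist"
      unfolding uniform_dist_eq_uniform_on_UNIV
      using card_le_independence_number[of UNIV _ E]
      by (intro lower) (auto intro: order_trans[OF mult_le_mono1])
    then show "entropy_symmetric E"
      unfolding entropy_symmetric_def using graph_entropy_le_log_colors[OF col \<open>\<omega> \<ge> 1\<close>]
      by (meson order_trans)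
  qed
qed

theorem mainTheorem2:
  fixes E :: "'a::finite \<Rightarrow> 'a \<Rightarrow> bool"
  assumes "simple_graph E" and "perfect E"
  shows "entropy_symmetric E \<longleftrightarrow>
    (\<exists>\<C> :: 'a set set. \<Union>\<C> = UNIV \<and> disjoint \<C> \<and>
       (\<forall>C\<in>\<C>. clique E C \<and> card C = clique_number E UNIV))"
proof -
  have perf: "perfect_on E UNIV" using assms(2) by (simp add: perfect_iff_perfect_on_UNIV)
  then have "chromatic_number E UNIV = clique_number E UNIV" unfolding perfect_on_def by simp
  then have "entropy_symmetric E \<longleftrightarrow> independence_number E UNIV * clique_number E UNIV \<le> CARD('a)"
    by (rule entropy_symmetric_iff[OF assms(1)])
  also have "\<dots> \<longleftrightarrow> (\<exists>\<C>. \<Union>\<C> = UNIV \<and> disjoint \<C> \<and> (\<forall>C\<in>\<C>. clique E C \<and> card C = clique_number E UNIV))"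
    using perfect_on_max_clique_partition_iff[OF assms(1) finite_class.finite_UNIV perf] by simp
  finally show ?thesis .
qed

end
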